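(* Let $m\ge1$ be an integer, let $\tilde H\in\Omega_{2n}$ be invertible and Hermitian, and let $\tilde B\in\Omega_{2n}$ be $\tilde H$-selfadjoint with $\sigma(\tilde B)\subset(0,\infty)$. Then there exists an $\tilde H$-selfadjoint $\tilde A\in\Omega_{2n}$ such that $\tilde A^m=\tilde B$.
   Context: $\Omega_{2n}=\{\begin{bmatrix}A_1&\bar A_2\\-A_2&\bar A_1\end{bmatrix}: A_1,A_2\in\mathbb{C}^{n\times n}\}\subset\mathbb{C}^{2n\times 2n}$. For an invertible Hermitian $H$, $A$ is $H$-selfadjoint if $HA=A^*H$. $\sigma(\cdot)$ denotes the spectrum. *)

theory Defs
  imports "Jordan_Normal_Form.Schur_Decomposition"
begin

definition Omega :: "nat \<Rightarrow> complex mat set" where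
  "Omega n = {four_block_mat A1 (map_mat cnj A2) (- A2) (map_mat cnj A1) | A1 A2.
                A1 \<in> carrier_mat n n \<and> A2 \<in> carrier_mat n n}"

definition hermitian_mat :: "complex mat \<Rightarrow> bool" where
  "hermitian_mat H \<longleftrightarrow> H \<in> carrier_mat (dim_row H) (dim_row H) \<and> mat_adjoint H = H"

definition H_selfadjoint :: "complex mat \<Rightarrow> complex mat \<Rightarrow> bool" where
  "H_selfadjoint H A \<longleftrightarrow> H * A = mat_adjoint A * H"

definition spectrum_mat :: "complex mat \<Rightarrow> complex set" where
  "spectrum_mat A = {k. eigenvalue A k}"

end

theory Submission
  imports Defs "HOL-Computational_Algebra.Field_as_Ring"
begin

(* The spectrum of B is positive real, so char_poly B splits into linear factors X - d with real
   d > 0. Newton lifting of the real m-th root of each d, glued by the Chinese remainder theorem,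
   gives a real polynomial p with char_poly B dividing p^m - X, so A = p(B) satisfies A^m = B by
   Cayley-Hamilton. Being a real polynomial in B, A inherits every (anti)linear intertwining
   relation of B: the relation K conj(B) = B K that characterises Omega, and H B = B^* H. *)

section \<open>Real m-th roots of X modulo products of linear factors\<close>

lemma square_dvd_power_add_minus_linear:
  fixes p e :: "'a :: comm_ring_1"
  shows "e\<^sup>2 dvd (p + e) ^ m - p ^ m - of_nat m * p ^ (m - 1) * e"
proof (cases m)
  case 0
  then show ?thesis by simp
next
  case (Suc k)
  have "e\<^sup>2 dvd (p + e) ^ Suc k - p ^ Suc k - of_nat (Suc k) * p ^ k * e"
  proof (induction k)
    case 0
    show ?case by simp
  next
    case (Suc k)
    then obtain s where "(p + e) ^ Suc k - p ^ Suc k - of_nat (Suc k) * p ^ k * e = e\<^sup>2 * s"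
      by (elim dvdE)
    then have s: "(p + e) ^ Suc k = p ^ Suc k + of_nat (Suc k) * p ^ k * e + e\<^sup>2 * s"
      by (simp add: algebra_simps)
    have "(p + e) ^ Suc (Suc k) - p ^ Suc (Suc k) - of_nat (Suc (Suc k)) * p ^ Suc k * e
        = e\<^sup>2 * ((p + e) * s + of_nat (Suc k) * p ^ k)"
      by (subst power_Suc, subst s) (simp add: algebra_simps power2_eq_square)
    then show ?case by simp
  qed
  with Suc show ?thesis by simp
qed

lemma power_diff_dvd_power_diff:
  fixes a b :: "'a :: comm_ring_1"
  shows "a - b dvd a ^ k - b ^ k"
proof (induction k)
  case (Suc k)
  have "a ^ Suc k - b ^ Suc k = a * (a ^ k - b ^ k) + (a - b) * b ^ k"
    by (simp add: algebra_simps)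
  with Suc show ?case by simp
qed simp

lemma root_of_X_mod_linear_power:
  fixes d r :: "'a :: field"
  assumes root: "r ^ m = d" and simple: "of_nat m * r ^ (m - 1) \<noteq> 0"
  shows "\<exists>p. [:-d, 1:] ^ Suc k dvd p ^ m - [:0, 1:] \<and> poly p d = r"
proof (induction k)
  case 0
  have "[:-d, 1:] ^ Suc 0 dvd - [:-d, 1:]"
    by (simp only: power_Suc0_right dvd_minus_iff dvd_refl)
  also have "- [:-d, 1:] = [:r:] ^ m - [:0, 1:]"
    using root by (simp add: poly_const_pow)
  finally have "[:-d, 1:] ^ Suc 0 dvd [:r:] ^ m - [:0, 1:]" .
  then show ?case
    by (intro exI[of _ "[:r:]"]) simp
next
  case (Suc k)
  then obtain p g where g: "p ^ m - [:0, 1:] = [:-d, 1:] ^ Suc k * g" and pd: "poly p d = r"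
    by (auto elim: dvdE)
  define a where "a = [:-d, 1:] ^ Suc k"
  \<comment> \<open>Newton step: c makes X - d divide the linear term of (p + e)^m - X.\<close>
  define c where "c = - poly g d / (of_nat m * r ^ (m - 1))"
  define e where "e = a * [:c:]"
  have "poly (g + of_nat m * p ^ (m - 1) * [:c:]) d = 0"
    using simple by (simp add: c_def pd of_nat_poly)
  then have "[:-d, 1:] dvd g + of_nat m * p ^ (m - 1) * [:c:]"
    by (simp only: poly_eq_0_iff_dvd)
  then have "a * [:-d, 1:] dvd a * (g + of_nat m * p ^ (m - 1) * [:c:])"
    by (rule mult_dvd_mono[OF dvd_refl])
  moreover have "a * [:-d, 1:] dvd (p + e) ^ m - p ^ m - of_nat m * p ^ (m - 1) * e"
  proof (rule dvd_trans[OF _ square_dvd_power_add_minus_linear])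
    have "[:-d, 1:] dvd a"
      unfolding a_def power_Suc by (rule dvd_triv_left)
    then have "a * [:-d, 1:] dvd a * a"
      by (rule mult_dvd_mono[OF dvd_refl])
    also have "a * a dvd e\<^sup>2"
      by (simp add: e_def power2_eq_square dvd_smult)
    finally show "a * [:-d, 1:] dvd e\<^sup>2" .
  qed
  ultimately have "a * [:-d, 1:] dvd a * (g + of_nat m * p ^ (m - 1) * [:c:])
      + ((p + e) ^ m - p ^ m - of_nat m * p ^ (m - 1) * e)"
    by (rule dvd_add)
  also have "\<dots> = (p + e) ^ m - [:0, 1:]"
    using g unfolding a_def[symmetric] e_def distrib_left by (simp add: algebra_simps)
  finally have "[:-d, 1:] ^ Suc (Suc k) dvd (p + e) ^ m - [:0, 1:]"
    by (simp add: a_def mult.commute)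
  moreover have "poly (p + e) d = r"
    using pd by (simp add: e_def a_def)
  ultimately show ?case by blast
qed

lemma power_root_mod_mult_coprime:
  fixes a b :: "'a :: euclidean_ring_gcd"
  assumes ab: "coprime a b" and a: "a dvd p ^ m - y" and b: "b dvd q ^ m - y"
  shows "\<exists>r. a * b dvd r ^ m - y"
proof -
  obtain u v where uv: "u * a + v * b = 1"
    using bezout_coefficients_fst_snd[of a b] ab by (metis coprime_imp_gcd_eq_1)
  define r where "r = p * v * b + q * u * a"
  have "r - p = r - p * (u * a + v * b)" and "r - q = r - q * (u * a + v * b)"
    using uv by simp_all
  then have "r - p = a * (u * (q - p))" and "r - q = b * (v * (p - q))"
    unfolding r_def by (simp_all add: algebra_simps)
  then have "a dvd r ^ m - p ^ m" and "b dvd r ^ m - q ^ m"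
    using power_diff_dvd_power_diff dvd_trans dvd_triv_left by metis+
  with a b have "a dvd (r ^ m - p ^ m) + (p ^ m - y)" and "b dvd (r ^ m - q ^ m) + (q ^ m - y)"
    by (simp_all only: dvd_add)
  then have "a dvd r ^ m - y" and "b dvd r ^ m - y"
    by simp_all
  with ab show ?thesis
    by (blast intro: divides_mult)
qed

lemma prod_list_map_dvd_power_prod_set:
  fixes f :: "'b \<Rightarrow> 'a :: comm_semiring_1"
  shows "(\<Prod>x\<leftarrow>xs. f x) dvd (\<Prod>x\<in>set xs. f x) ^ length xs"
proof (induction xs)
  case (Cons x xs)
  have "f x dvd (\<Prod>x\<in>set (x # xs). f x)"
    by (simp add: dvd_prodI)
  moreover have "(\<Prod>x\<leftarrow>xs. f x) dvd (\<Prod>x\<in>set (x # xs). f x) ^ length xs"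
    using Cons.IH by (rule dvd_trans) (auto intro: dvd_power_same prod_dvd_prod_subset)
  ultimately show ?case
    by (simp add: mult_dvd_mono)
qed simp

lemma real_root_of_X_mod_prod_linear_power:
  fixes S :: "real set"
  assumes "finite S" and "\<forall>d\<in>S. d > 0" and "m \<ge> 1"
  shows "\<exists>p. (\<Prod>d\<in>S. [:-d, 1:]) ^ k dvd p ^ m - [:0, 1:]"
  using assms(1,2)
proof (induction S rule: finite_induct)
  case empty
  show ?case by simp
next
  case (insert d S)
  obtain q where q: "(\<Prod>e\<in>S. [:-e, 1:]) ^ k dvd q ^ m - [:0, 1:]"
    using insert by auto
  have "d > 0"
    using insert.prems by simp
  then have "root m d ^ m = d" and "of_nat m * root m d ^ (m - 1) \<noteq> 0"
    using \<open>m \<ge> 1\<close> by simp_all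
  then obtain p where "[:-d, 1:] ^ Suc k dvd p ^ m - [:0, 1:]"
    using root_of_X_mod_linear_power by blast
  with le_imp_power_dvd[of k "Suc k"] have p: "[:-d, 1:] ^ k dvd p ^ m - [:0, 1:]"
    by (meson dvd_trans le_SucI order_refl)
  have "poly (\<Prod>e\<in>S. [:-e, 1:]) d \<noteq> 0"
    using insert by (simp add: poly_prod)
  then have "\<not> [:-d, 1:] dvd (\<Prod>e\<in>S. [:-e, 1:])"
    by (simp add: poly_eq_0_iff_dvd)
  then have "coprime [:-d, 1:] (\<Prod>e\<in>S. [:-e, 1:])"
    by (intro prime_elem_imp_coprime irreducible_imp_prime_elem irreducible_linear_field_poly) simp_all
  then have "coprime ([:-d, 1:] ^ k) ((\<Prod>e\<in>S. [:-e, 1:]) ^ k)"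
    by simp
  from power_root_mod_mult_coprime[OF this p q] show ?case
    unfolding prod.insert[OF insert.hyps] power_mult_distrib .
qed

lemma real_root_of_X_mod_prod_linear:
  fixes ds :: "real list"
  assumes "\<forall>d\<in>set ds. d > 0" and "m \<ge> 1"
  shows "\<exists>p. (\<Prod>d\<leftarrow>ds. [:-d, 1:]) dvd p ^ m - [:0, 1:]"
  using real_root_of_X_mod_prod_linear_power[OF finite_set assms, of "length ds"]
    prod_list_map_dvd_power_prod_set dvd_trans by blast

section \<open>Evaluating polynomials at square matrices\<close>

lemma zero_smult_mat [simp]: "(0 :: 'a :: semiring_0) \<cdot>\<^sub>m A = 0\<^sub>m (dim_row A) (dim_col A)"
  by (rule eq_matI) auto

lemma one_smult_mat [simp]: "(1 :: 'a :: monoid_mult) \<cdot>\<^sub>m A = A"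
  by (rule eq_matI) auto

definition poly_mat :: "nat \<Rightarrow> 'a :: comm_ring_1 poly \<Rightarrow> 'a mat \<Rightarrow> 'a mat" where
  "poly_mat n p A = foldr (\<lambda>c M. c \<cdot>\<^sub>m 1\<^sub>m n + A * M) (coeffs p) (0\<^sub>m n n)"

lemma poly_mat_0 [simp]: "poly_mat n 0 A = 0\<^sub>m n n"
  by (simp add: poly_mat_def)

lemma poly_mat_pCons:
  assumes "A \<in> carrier_mat n n"
  shows "poly_mat n (pCons a p) A = a \<cdot>\<^sub>m 1\<^sub>m n + A * poly_mat n p A"
proof (cases "p = 0 \<and> a = 0")
  case True
  then show ?thesis
    using assms by (simp add: poly_mat_def)
next
  case False
  then have "coeffs (pCons a p) = a # coeffs p"
    by (auto simp: coeffs_pCons_eq_cCons cCons_def)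
  then show ?thesis
    by (simp add: poly_mat_def)
qed

lemma poly_mat_carrier [simp]:
  assumes "A \<in> carrier_mat n n"
  shows "poly_mat n p A \<in> carrier_mat n n"
  by (induction p) (use assms in \<open>simp_all add: poly_mat_pCons\<close>)

lemma poly_mat_dim [simp]:
  assumes "A \<in> carrier_mat n n"
  shows "dim_row (poly_mat n p A) = n" and "dim_col (poly_mat n p A) = n"
  using poly_mat_carrier[OF assms] by auto

lemma poly_mat_const:
  assumes "A \<in> carrier_mat n n"
  shows "poly_mat n [:c:] A = c \<cdot>\<^sub>m 1\<^sub>m n"
  using assms by (simp add: poly_mat_pCons)

lemma poly_mat_1:
  assumes "A \<in> carrier_mat n n"
  shows "poly_mat n 1 A = 1\<^sub>m n"
proof -
  have "poly_mat n [:1:] A = 1\<^sub>m n"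
    using assms by (simp add: poly_mat_const)
  then show ?thesis
    by (simp add: one_pCons)
qed

lemma poly_mat_linear:
  assumes "A \<in> carrier_mat n n"
  shows "poly_mat n [:-c, 1:] A = A - c \<cdot>\<^sub>m 1\<^sub>m n"
  using assms by (intro eq_matI) (auto simp: poly_mat_pCons)

lemma poly_mat_X:
  assumes "A \<in> carrier_mat n n"
  shows "poly_mat n [:0, 1:] A = A"
  using assms by (intro eq_matI) (auto simp: poly_mat_pCons)

lemma poly_mat_add:
  assumes A: "A \<in> carrier_mat n n"
  shows "poly_mat n (p + q) A = poly_mat n p A + poly_mat n q A"
proof (induction p arbitrary: q)
  case (pCons a p)
  obtain b q' where q: "q = pCons b q'"
    by (cases q)
  let ?P = "poly_mat n p A" and ?Q = "poly_mat n q' A"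
  have c: "?P \<in> carrier_mat n n" "?Q \<in> carrier_mat n n" "A * ?P \<in> carrier_mat n n"
    "A * ?Q \<in> carrier_mat n n"
    using A by simp_all
  have "poly_mat n (pCons a p + q) A = (a + b) \<cdot>\<^sub>m 1\<^sub>m n + (A * ?P + A * ?Q)"
    using A by (simp add: q poly_mat_pCons pCons.IH mult_add_distrib_mat[OF A c(1,2)])
  also have "\<dots> = (a \<cdot>\<^sub>m 1\<^sub>m n + A * ?P) + (b \<cdot>\<^sub>m 1\<^sub>m n + A * ?Q)"
    using c by (intro eq_matI) (auto simp: algebra_simps)
  finally show ?case
    using A by (simp add: q poly_mat_pCons)
qed (use A in simp)

lemma poly_mat_smult:
  assumes A: "A \<in> carrier_mat n n"
  shows "poly_mat n (smult c p) A = c \<cdot>\<^sub>m poly_mat n p A"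
proof (induction p)
  case (pCons a p)
  let ?P = "poly_mat n p A"
  have c: "?P \<in> carrier_mat n n" "A * ?P \<in> carrier_mat n n"
    using A by simp_all
  have "poly_mat n (smult c (pCons a p)) A = (c * a) \<cdot>\<^sub>m 1\<^sub>m n + c \<cdot>\<^sub>m (A * ?P)"
    using A by (simp add: poly_mat_pCons pCons.IH mult_smult_distrib[OF A c(1)])
  also have "\<dots> = c \<cdot>\<^sub>m (a \<cdot>\<^sub>m 1\<^sub>m n + A * ?P)"
    using c by (intro eq_matI) (auto simp: algebra_simps)
  finally show ?case
    using A by (simp add: poly_mat_pCons)
qed (use A in simp)

lemma poly_mat_mult:
  assumes A: "A \<in> carrier_mat n n"
  shows "poly_mat n (p * q) A = poly_mat n p A * poly_mat n q A"
proof (induction p)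
  case (pCons a p)
  let ?P = "poly_mat n p A" and ?Q = "poly_mat n q A"
  have c: "?P \<in> carrier_mat n n" "?Q \<in> carrier_mat n n" "A * (?P * ?Q) \<in> carrier_mat n n"
    using A by (auto intro: mult_carrier_mat)
  have "poly_mat n (pCons a p * q) A = a \<cdot>\<^sub>m ?Q + (0 \<cdot>\<^sub>m 1\<^sub>m n + A * (?P * ?Q))"
    using A by (simp add: poly_mat_add poly_mat_smult poly_mat_pCons pCons.IH)
  also have "\<dots> = (a \<cdot>\<^sub>m 1\<^sub>m n) * ?Q + (A * ?P) * ?Q"
    using c by (simp add: mult_smult_assoc_mat[OF one_carrier_mat c(2)] assoc_mult_mat[OF A c(1,2)])
  also have "\<dots> = (a \<cdot>\<^sub>m 1\<^sub>m n + A * ?P) * ?Q"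
    using A c by (intro add_mult_distrib_mat[symmetric]) auto
  finally show ?case
    using A by (simp add: poly_mat_pCons)
qed (use A in simp)

lemma poly_mat_power:
  assumes "A \<in> carrier_mat n n"
  shows "poly_mat n (p ^ k) A = poly_mat n p A ^\<^sub>m k"
proof (induction k)
  case (Suc k)
  show ?case
    unfolding power_Suc2 poly_mat_mult[OF assms] Suc by simp
qed (use assms in \<open>simp add: poly_mat_1\<close>)

lemma poly_mat_intertwine:
  assumes J: "J \<in> carrier_mat k n" and Y: "Y \<in> carrier_mat n n" and Z: "Z \<in> carrier_mat k k"
    and JY: "J * Y = Z * J"
  shows "J * poly_mat n p Y = poly_mat k p Z * J"
proof (induction p)
  case (pCons a p)
  let ?Y = "poly_mat n p Y" and ?Z = "poly_mat k p Z"
  have c: "?Y \<in> carrier_mat n n" "?Z \<in> carrier_mat k k"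
    using Y Z by simp_all
  have "J * (Y * ?Y) = (J * Y) * ?Y"
    by (rule assoc_mult_mat[OF J Y c(1), symmetric])
  also have "\<dots> = Z * (J * ?Y)"
    unfolding JY by (rule assoc_mult_mat[OF Z J c(1)])
  also have "\<dots> = (Z * ?Z) * J"
    unfolding pCons.IH by (rule assoc_mult_mat[OF Z c(2) J, symmetric])
  finally have YZ: "J * (Y * ?Y) = (Z * ?Z) * J" .
  have one: "J * (a \<cdot>\<^sub>m 1\<^sub>m n) = (a \<cdot>\<^sub>m 1\<^sub>m k) * J"
    using J by (simp add: mult_smult_distrib[OF J one_carrier_mat] mult_smult_assoc_mat[OF one_carrier_mat J])
  have "J * poly_mat n (pCons a p) Y = J * (a \<cdot>\<^sub>m 1\<^sub>m n) + J * (Y * ?Y)"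
    unfolding poly_mat_pCons[OF Y]
    by (rule mult_add_distrib_mat[OF J smult_carrier_mat[OF one_carrier_mat] mult_carrier_mat[OF Y c(1)]])
  also have "\<dots> = (a \<cdot>\<^sub>m 1\<^sub>m k + Z * ?Z) * J"
    unfolding one YZ
    by (rule add_mult_distrib_mat[OF smult_carrier_mat[OF one_carrier_mat] mult_carrier_mat[OF Z c(2)] J, symmetric])
  finally show ?case
    unfolding poly_mat_pCons[OF Z] .
qed (use J in simp)

lemma poly_mat_commute:
  assumes "A \<in> carrier_mat n n"
  shows "A * poly_mat n p A = poly_mat n p A * A"
  using poly_mat_intertwine[OF assms assms assms refl] .

lemma poly_mat_similar:
  assumes "similar_mat_wit A B P Q" and A: "A \<in> carrier_mat n n"
  shows "poly_mat n p A = P * poly_mat n p B * Q"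
proof -
  have B: "B \<in> carrier_mat n n" and P: "P \<in> carrier_mat n n" and Q: "Q \<in> carrier_mat n n"
    and PQ: "P * Q = 1\<^sub>m n" and QP: "Q * P = 1\<^sub>m n" and APBQ: "A = P * B * Q"
    using assms unfolding similar_mat_wit_def Let_def by auto
  have "A * P = P * B * (Q * P)"
    unfolding APBQ by (rule assoc_mult_mat[OF mult_carrier_mat[OF P B] Q P])
  then have "P * B = A * P"
    using B P QP by simp
  then have "P * poly_mat n p B = poly_mat n p A * P"
    by (rule poly_mat_intertwine[OF P B A])
  then have "P * poly_mat n p B * Q = poly_mat n p A * (P * Q)"
    using A P Q by (simp add: assoc_mult_mat[of _ n n P n Q n])
  then show ?thesis
    using A PQ by simp
qed

lemma poly_mat_transpose:
  assumes A: "A \<in> carrier_mat n n"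
  shows "transpose_mat (poly_mat n p A) = poly_mat n p (transpose_mat A)"
proof (induction p)
  case (pCons a p)
  let ?P = "poly_mat n p A"
  have c: "?P \<in> carrier_mat n n" "transpose_mat A \<in> carrier_mat n n"
    using A by simp_all
  have "transpose_mat (a \<cdot>\<^sub>m 1\<^sub>m n + A * ?P) = a \<cdot>\<^sub>m 1\<^sub>m n + transpose_mat ?P * transpose_mat A"
    using A c by (intro eq_matI) (auto simp: transpose_mult[OF A c(1), symmetric])
  also have "\<dots> = a \<cdot>\<^sub>m 1\<^sub>m n + transpose_mat A * poly_mat n p (transpose_mat A)"
    using c by (simp add: pCons.IH poly_mat_commute)
  finally show ?case
    using A c by (simp add: poly_mat_pCons)
qed (use A in auto)

lemma (in comm_ring_hom) poly_mat_hom: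
  assumes A: "A \<in> carrier_mat n n"
  shows "mat\<^sub>h (poly_mat n p A) = poly_mat n (map_poly hom p) (mat\<^sub>h A)"
proof (induction p)
  case (pCons a p)
  have c: "poly_mat n p A \<in> carrier_mat n n"
    using A by simp
  have "mat\<^sub>h (a \<cdot>\<^sub>m 1\<^sub>m n + A * poly_mat n p A) = hom a \<cdot>\<^sub>m 1\<^sub>m n + mat\<^sub>h (A * poly_mat n p A)"
    using A c by (intro eq_matI) (auto simp: hom_add hom_mult)
  with A c pCons.IH show ?case
    by (simp add: poly_mat_pCons map_poly_pCons_hom mat_hom_mult[OF A c])
qed (use A in auto)

lemma mat_adjoint_eq_transpose_cnj:
  fixes A :: "complex mat"
  assumes "A \<in> carrier_mat n n"
  shows "mat_adjoint A = transpose_mat (map_mat cnj A)"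
  unfolding mat_adjoint_def by (rule eq_matI) (use assms in \<open>auto simp: mat_of_rows_index\<close>)

lemma comm_ring_hom_cnj: "comm_ring_hom cnj"
  by unfold_locales simp_all

lemma map_poly_cnj_of_real [simp]: "map_poly cnj (map_poly complex_of_real p) = map_poly complex_of_real p"
  by (simp add: map_poly_map_poly o_def)

lemma poly_mat_adjoint:
  fixes A :: "complex mat"
  assumes A: "A \<in> carrier_mat n n"
  shows "mat_adjoint (poly_mat n p A) = poly_mat n (map_poly cnj p) (mat_adjoint A)"
  using comm_ring_hom.poly_mat_hom[OF comm_ring_hom_cnj A, of p] A
  by (simp add: mat_adjoint_eq_transpose_cnj[OF poly_mat_carrier[OF A]]
      mat_adjoint_eq_transpose_cnj[OF A] poly_mat_transpose)

section \<open>Real polynomial m-th roots of matrices with positive spectrum\<close>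

lemma upper_triangular_shift_mult_zero_cols:
  fixes M T :: "'a :: comm_ring_1 mat"
  assumes M: "M \<in> carrier_mat n n" and T: "T \<in> carrier_mat n n" and ut: "upper_triangular T"
    and k: "k < n" and zero: "\<And>i j. i < n \<Longrightarrow> j < k \<Longrightarrow> M $$ (i, j) = 0"
    and i: "i < n" and j: "j \<le> k"
  shows "(M * (T - T $$ (k, k) \<cdot>\<^sub>m 1\<^sub>m n)) $$ (i, j) = 0"
proof -
  have "(M * (T - T $$ (k, k) \<cdot>\<^sub>m 1\<^sub>m n)) $$ (i, j)
      = (\<Sum>l<n. M $$ (i, l) * (T $$ (l, j) - (if l = j then T $$ (k, k) else 0)))"
    using M T i j k by (auto simp: scalar_prod_def lessThan_atLeast0 intro!: sum.cong)
  also have "\<dots> = 0"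
  proof (rule sum.neutral, intro ballI)
    fix l
    assume l: "l \<in> {..<n}"
    show "M $$ (i, l) * (T $$ (l, j) - (if l = j then T $$ (k, k) else 0)) = 0"
    proof (cases "l < k")
      case False
      with j have "l = j \<and> l = k \<or> j < l"
        by auto
      with ut T l show ?thesis
        unfolding upper_triangular_def by auto
    qed (simp add: zero i)
  qed
  finally show ?thesis .
qed

lemma poly_mat_upper_triangular_diag_eq_0:
  assumes T: "T \<in> carrier_mat n n" and ut: "upper_triangular T"
  shows "poly_mat n (\<Prod>e\<leftarrow>diag_mat T. [:-e, 1:]) T = 0\<^sub>m n n"
proof -
  have len: "length (diag_mat T) = n"
    using T by (simp add: diag_mat_def)
  have "poly_mat n (\<Prod>e\<leftarrow>take k (diag_mat T). [:-e, 1:]) T $$ (i, j) = 0"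
    if "k \<le> n" "i < n" "j < k" for k i j
    using that
  proof (induction k arbitrary: i j)
    case (Suc k)
    let ?M = "poly_mat n (\<Prod>e\<leftarrow>take k (diag_mat T). [:-e, 1:]) T"
    have "take (Suc k) (diag_mat T) = take k (diag_mat T) @ [T $$ (k, k)]"
      using Suc.prems T len by (simp add: take_Suc_conv_app_nth diag_mat_def)
    then have prod_Suc: "(\<Prod>e\<leftarrow>take (Suc k) (diag_mat T). [:-e, 1:])
        = (\<Prod>e\<leftarrow>take k (diag_mat T). [:-e, 1:]) * [:-T $$ (k, k), 1:]"
      by simp
    have "poly_mat n (\<Prod>e\<leftarrow>take (Suc k) (diag_mat T). [:-e, 1:]) T
        = ?M * (T - T $$ (k, k) \<cdot>\<^sub>m 1\<^sub>m n)"
      unfolding prod_Suc poly_mat_mult[OF T] poly_mat_linear[OF T] ..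
    also have "\<dots> $$ (i, j) = 0"
      using Suc T by (intro upper_triangular_shift_mult_zero_cols[OF _ T ut]) simp_all
    finally show ?case .
  qed simp
  from this[of n] show ?thesis
    using T len by (intro eq_matI) simp_all
qed

lemma poly_mat_char_poly_eq_0:
  fixes A :: "'a :: conjugatable_ordered_field mat"
  assumes A: "A \<in> carrier_mat n n" and split: "char_poly A = (\<Prod>e\<leftarrow>es. [:-e, 1:])"
  shows "poly_mat n (char_poly A) A = 0\<^sub>m n n"
proof -
  obtain T P Q where "schur_decomposition A es = (T, P, Q)"
    by (cases "schur_decomposition A es")
  with schur_decomposition[OF A split]
  have sim: "similar_mat_wit A T P Q" and ut: "upper_triangular T" and diag: "diag_mat T = es"
    by auto
  have T: "T \<in> carrier_mat n n" and P: "P \<in> carrier_mat n n" and Q: "Q \<in> carrier_mat n n"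
    using sim A unfolding similar_mat_wit_def Let_def by auto
  have "poly_mat n (char_poly A) A = P * poly_mat n (\<Prod>e\<leftarrow>diag_mat T. [:-e, 1:]) T * Q"
    unfolding split diag by (rule poly_mat_similar[OF sim A])
  also have "\<dots> = 0\<^sub>m n n"
    using P Q by (simp add: poly_mat_upper_triangular_diag_eq_0[OF T ut])
  finally show ?thesis .
qed

lemma poly_mat_eq_if_dvd_diff:
  assumes A: "A \<in> carrier_mat n n" and r: "poly_mat n r A = 0\<^sub>m n n" and dvd: "r dvd p - q"
  shows "poly_mat n p A = poly_mat n q A"
proof -
  obtain s where "p - q = r * s"
    using dvd by (elim dvdE)
  then have "p = q + r * s"
    by (metis add.commute diff_add_cancel)
  with A r show ?thesis
    by (simp add: poly_mat_add poly_mat_mult)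
qed

lemma positive_spectrum_real_poly_root:
  fixes B :: "complex mat"
  assumes B: "B \<in> carrier_mat n n" and m: "m \<ge> 1"
    and spec: "spectrum_mat B \<subseteq> complex_of_real ` {0<..}"
  shows "\<exists>p. poly_mat n (map_poly complex_of_real p) B ^\<^sub>m m = B"
proof -
  interpret of_real_poly: map_poly_comm_ring_hom "complex_of_real" ..
  obtain as where split: "char_poly B = (\<Prod>a\<leftarrow>as. [:-a, 1:])"
    using char_poly_factorized[OF B] by blast
  have pos: "a \<in> complex_of_real ` {0<..}" if "a \<in> set as" for a
  proof -
    have "poly (char_poly B) a = 0"
      unfolding split poly_prod_list using that by (induction as) auto
    then show ?thesis
      using spec eigenvalue_root_char_poly[OF B] unfolding spectrum_mat_def by blast
  qed
  define rs where "rs = map Re as"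
  have as: "as = map complex_of_real rs"
    unfolding rs_def using pos by (force intro!: map_idI[symmetric])
  have rs: "\<forall>r\<in>set rs. r > 0"
    unfolding rs_def using pos by fastforce
  obtain p where "(\<Prod>r\<leftarrow>rs. [:-r, 1:]) dvd p ^ m - [:0, 1:]"
    using real_root_of_X_mod_prod_linear[OF rs m] by blast
  then have "map_poly complex_of_real (\<Prod>r\<leftarrow>rs. [:-r, 1:])
      dvd map_poly complex_of_real (p ^ m - [:0, 1:])"
    by (rule of_real_poly.hom_dvd)
  also have "map_poly complex_of_real (\<Prod>r\<leftarrow>rs. [:-r, 1:]) = char_poly B"
    unfolding split as
  proof (induction rs)
    case (Cons r rs)
    have "map_poly complex_of_real [:-r, 1:] = [:-complex_of_real r, 1:]"
      by simp
    with Cons show ?case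
      by (simp only: list.map prod_list.Cons of_real_poly.hom_mult)
  qed simp
  finally have "char_poly B dvd map_poly complex_of_real p ^ m - [:0, 1:]"
    by (simp add: of_real_poly.hom_minus of_real_poly.hom_power)
  then have "poly_mat n (map_poly complex_of_real p ^ m) B = poly_mat n [:0, 1:] B"
    by (rule poly_mat_eq_if_dvd_diff[OF B poly_mat_char_poly_eq_0[OF B split]])
  then show ?thesis
    using B by (auto simp: poly_mat_power poly_mat_X)
qed

section \<open>The matrices of Omega\<close>

definition Kmat :: "nat \<Rightarrow> complex mat" where
  "Kmat n = four_block_mat (0\<^sub>m n n) (1\<^sub>m n) (- 1\<^sub>m n) (0\<^sub>m n n)"

lemma Kmat_carrier: "Kmat n \<in> carrier_mat (n + n) (n + n)"
  unfolding Kmat_def by (rule four_block_carrier_mat) auto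

lemma Kmat_mult_four_block:
  assumes "P \<in> carrier_mat n n" "Q \<in> carrier_mat n n" "R \<in> carrier_mat n n" "S \<in> carrier_mat n n"
  shows "Kmat n * four_block_mat P Q R S = four_block_mat R S (- P) (- Q)"
  unfolding Kmat_def
  by (subst mult_four_block_mat[OF zero_carrier_mat one_carrier_mat
        uminus_carrier_mat[OF one_carrier_mat] zero_carrier_mat assms]) (use assms in auto)

lemma four_block_mult_Kmat:
  assumes "P \<in> carrier_mat n n" "Q \<in> carrier_mat n n" "R \<in> carrier_mat n n" "S \<in> carrier_mat n n"
  shows "four_block_mat P Q R S * Kmat n = four_block_mat (- Q) P (- S) R"
  unfolding Kmat_def
  by (subst mult_four_block_mat[OF assms zero_carrier_mat one_carrier_mat
        uminus_carrier_mat[OF one_carrier_mat] zero_carrier_mat]) (use assms in auto)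

lemma four_block_mat_inject:
  assumes "A \<in> carrier_mat n n" "B \<in> carrier_mat n n" "C \<in> carrier_mat n n" "D \<in> carrier_mat n n"
    "A' \<in> carrier_mat n n" "B' \<in> carrier_mat n n" "C' \<in> carrier_mat n n" "D' \<in> carrier_mat n n"
  shows "four_block_mat A B C D = four_block_mat A' B' C' D'
    \<longleftrightarrow> A = A' \<and> B = B' \<and> C = C' \<and> D = D'"
proof
  assume eq: "four_block_mat A B C D = four_block_mat A' B' C' D'"
  have e: "four_block_mat A B C D $$ (i, j) = four_block_mat A' B' C' D' $$ (i, j)" for i j
    using eq by simp
  have "A $$ (i, j) = A' $$ (i, j) \<and> B $$ (i, j) = B' $$ (i, j)
      \<and> C $$ (i, j) = C' $$ (i, j) \<and> D $$ (i, j) = D' $$ (i, j)" if "i < n" "j < n" for i j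
    using e[of i j] e[of i "j + n"] e[of "i + n" j] e[of "i + n" "j + n"] assms that by simp
  then show "A = A' \<and> B = B' \<and> C = C' \<and> D = D'"
    using assms by (intro conjI eq_matI) auto
qed simp

lemma map_mat_cnj_cnj [simp]: "map_mat cnj (map_mat cnj A) = (A :: complex mat)"
  by (rule eq_matI) auto

lemma map_mat_cnj_uminus: "map_mat cnj (- A) = - map_mat cnj (A :: complex mat)"
  by (rule eq_matI) auto

lemma Omega_iff:
  "X \<in> Omega n \<longleftrightarrow> X \<in> carrier_mat (n + n) (n + n) \<and> Kmat n * map_mat cnj X = X * Kmat n"
proof
  assume "X \<in> Omega n"
  then obtain A1 A2 where X: "X = four_block_mat A1 (map_mat cnj A2) (- A2) (map_mat cnj A1)"
    and c: "A1 \<in> carrier_mat n n" "A2 \<in> carrier_mat n n"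
    unfolding Omega_def by blast
  have "map_mat cnj X = four_block_mat (map_mat cnj A1) A2 (- map_mat cnj A2) A1"
    unfolding X using c by (simp add: map_four_block_mat[of _ n n] map_mat_cnj_uminus)
  then have "Kmat n * map_mat cnj X = four_block_mat (- map_mat cnj A2) A1 (- map_mat cnj A1) (- A2)"
    using c by (simp add: Kmat_mult_four_block)
  also have "\<dots> = X * Kmat n"
    unfolding X using c by (simp add: four_block_mult_Kmat)
  finally show "X \<in> carrier_mat (n + n) (n + n) \<and> Kmat n * map_mat cnj X = X * Kmat n"
    unfolding X using c by simp
next
  assume "X \<in> carrier_mat (n + n) (n + n) \<and> Kmat n * map_mat cnj X = X * Kmat n"
  then have Xc: "X \<in> carrier_mat (n + n) (n + n)" and K: "Kmat n * map_mat cnj X = X * Kmat n"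
    by auto
  obtain P Q R S where "split_block X n n = (P, Q, R, S)"
    by (cases "split_block X n n")
  from split_block[OF this, of n n] Xc
  have c: "P \<in> carrier_mat n n" "Q \<in> carrier_mat n n" "R \<in> carrier_mat n n" "S \<in> carrier_mat n n"
    and X: "X = four_block_mat P Q R S"
    by auto
  have "four_block_mat (map_mat cnj R) (map_mat cnj S) (- map_mat cnj P) (- map_mat cnj Q)
      = four_block_mat (- Q) P (- S) R"
    using K c unfolding X by (simp add: map_four_block_mat Kmat_mult_four_block four_block_mult_Kmat)
  then have "map_mat cnj R = - Q" "map_mat cnj S = P" "map_mat cnj P = S"
    using c by (auto simp: four_block_mat_inject)
  then have "X = four_block_mat P (map_mat cnj (- R)) (- (- R)) (map_mat cnj P)"
    unfolding X map_mat_cnj_uminus by simp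
  with c show "X \<in> Omega n"
    unfolding Omega_def by (intro CollectI exI[of _ P] exI[of _ "- R"]) simp
qed

lemma real_poly_mat_Omega:
  assumes "B \<in> Omega n"
  shows "poly_mat (n + n) (map_poly complex_of_real p) B \<in> Omega n"
proof -
  let ?p = "map_poly complex_of_real p"
  have B: "B \<in> carrier_mat (n + n) (n + n)" and BK: "Kmat n * map_mat cnj B = B * Kmat n"
    using assms by (auto simp: Omega_iff)
  have "map_mat cnj (poly_mat (n + n) ?p B) = poly_mat (n + n) ?p (map_mat cnj B)"
    using comm_ring_hom.poly_mat_hom[OF comm_ring_hom_cnj B] by simp
  moreover have "Kmat n * poly_mat (n + n) ?p (map_mat cnj B) = poly_mat (n + n) ?p B * Kmat n"
    using B by (intro poly_mat_intertwine[OF Kmat_carrier _ B BK]) simp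
  ultimately show ?thesis
    using B by (simp add: Omega_iff)
qed

lemma real_poly_mat_H_selfadjoint:
  assumes H: "H \<in> carrier_mat n n" and B: "B \<in> carrier_mat n n" and HB: "H_selfadjoint H B"
  shows "H_selfadjoint H (poly_mat n (map_poly complex_of_real p) B)"
proof -
  have "H * B = mat_adjoint B * H"
    using HB unfolding H_selfadjoint_def .
  moreover have "mat_adjoint B \<in> carrier_mat n n"
    using B by (simp add: mat_adjoint_eq_transpose_cnj)
  ultimately show ?thesis
    unfolding H_selfadjoint_def using B
    by (simp add: poly_mat_adjoint poly_mat_intertwine[OF H B])
qed

theorem mainTheorem6:
  fixes n m :: nat and H B :: "complex mat"
  assumes "m \<ge> 1"
    and "H \<in> Omega n" and "invertible_mat H" and "hermitian_mat H"
    and "B \<in> Omega n" and "H_selfadjoint H B"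
    and "spectrum_mat B \<subseteq> complex_of_real ` {0<..}"
  shows "\<exists>A \<in> Omega n. H_selfadjoint H A \<and> A ^\<^sub>m m = B"
proof -
  have B: "B \<in> carrier_mat (n + n) (n + n)" and H: "H \<in> carrier_mat (n + n) (n + n)"
    using assms(2,5) by (simp_all add: Omega_iff)
  obtain p where "poly_mat (n + n) (map_poly complex_of_real p) B ^\<^sub>m m = B"
    using positive_spectrum_real_poly_root[OF B assms(1,7)] by blast
  moreover have "poly_mat (n + n) (map_poly complex_of_real p) B \<in> Omega n"
    using assms(5) by (rule real_poly_mat_Omega)
  moreover have "H_selfadjoint H (poly_mat (n + n) (map_poly complex_of_real p) B)"
    using H B assms(6) by (rule real_poly_mat_H_selfadjoint)
  ultimately show ?thesis
    by blast
qed

end
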